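(* Let $F_k$ be the free group with basis $a_1,\ldots,a_k$, let $H_1, H_2 < F_k$ be finitely generated subgroups, and let $G < H_1 \cap H_2$ be a subgroup of finite index in $H_1$. Suppose every divisor of $[H_1 : G]$ other than $1$ is larger than $|V(\operatorname{Core}(H_2))|$. Then $H_1 \leq H_2$.
   Context: For a subgroup $\Gamma < F_k$, $X_\Gamma$ is the Schreier graph of $F_k$ with respect to $\Gamma$ and the generators $a_1,\ldots,a_k$: vertices are cosets of $\Gamma$, with an oriented edge labelled $a_j$ from $g\Gamma$ to $a_j g\Gamma$. The core of a graph is the subgraph of all vertices and edges contained in some cycle, and $\operatorname{Core}(\Gamma)$ is the core of $X_\Gamma$. $V(\cdot)$ denotes the vertex set. *)

theory Defs
  imports "HOL-Algebra.Algebra"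
begin

text \<open>A letter (j, True) stands for a_j, the letter (j, False) for a_j inverse.\<close>
type_synonym letter = "nat \<times> bool"

definition inv_letter :: "letter \<Rightarrow> letter" where
  "inv_letter x = (fst x, \<not> snd x)"

fun reduced :: "letter list \<Rightarrow> bool" where
  "reduced [] = True"
| "reduced [x] = True"
| "reduced (x # y # ys) = (y \<noteq> inv_letter x \<and> reduced (y # ys))"

fun red_cons :: "letter \<Rightarrow> letter list \<Rightarrow> letter list" where
  "red_cons x [] = [x]"
| "red_cons x (y # ys) = (if y = inv_letter x then ys else x # y # ys)"

definition red :: "letter list \<Rightarrow> letter list" where
  "red w = foldr red_cons w []"

definition free_group :: "nat \<Rightarrow> letter list monoid" where
  "free_group k = \<lparr> carrier = {w. reduced w \<and> (\<forall>x\<in>set w. fst x < k)},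
                    monoid.mult = (\<lambda>u v. red (u @ v)), one = [] \<rparr>"

definition fin_gen_subgroup :: "nat \<Rightarrow> letter list set \<Rightarrow> bool" where
  "fin_gen_subgroup k H \<longleftrightarrow> subgroup H (free_group k) \<and>
     (\<exists>S. finite S \<and> S \<subseteq> carrier (free_group k) \<and> H = generate (free_group k) S)"

definition schreier_vertices :: "nat \<Rightarrow> letter list set \<Rightarrow> letter list set set" where
  "schreier_vertices k \<Gamma> = {g <#\<^bsub>free_group k\<^esub> \<Gamma> | g. g \<in> carrier (free_group k)}"

text \<open>Traversing from vertex C along letter x: forward along the a_j-edge
  (C to a_j C) for x = (j,True), backward along an a_j-edge (C to a_j^-1 C) for x = (j,False).\<close>
definition letter_act :: "nat \<Rightarrow> letter \<Rightarrow> letter list set \<Rightarrow> letter list set" where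
  "letter_act k x C = [x] <#\<^bsub>free_group k\<^esub> C"

fun walk_verts :: "nat \<Rightarrow> letter list set \<Rightarrow> letter list \<Rightarrow> letter list set list" where
  "walk_verts k v [] = [v]"
| "walk_verts k v (x # xs) = v # walk_verts k (letter_act k x v) xs"

definition cyclically_reduced :: "letter list \<Rightarrow> bool" where
  "cyclically_reduced w \<longleftrightarrow> reduced w \<and> (w \<noteq> [] \<longrightarrow> hd w \<noteq> inv_letter (last w))"

text \<open>A cycle in X_Gamma: a nonempty closed walk without backtracking (cyclically reduced).\<close>
definition schreier_cycle :: "nat \<Rightarrow> letter list set \<Rightarrow> letter list set \<Rightarrow> letter list \<Rightarrow> bool" where
  "schreier_cycle k \<Gamma> v w \<longleftrightarrow> v \<in> schreier_vertices k \<Gamma> \<and> w \<noteq> [] \<and>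
     (\<forall>x\<in>set w. fst x < k) \<and> cyclically_reduced w \<and> last (walk_verts k v w) = v"

text \<open>V(Core(Gamma)): vertices of X_Gamma lying on some cycle.\<close>
definition core_vertices :: "nat \<Rightarrow> letter list set \<Rightarrow> letter list set set" where
  "core_vertices k \<Gamma> = {u. \<exists>v w. schreier_cycle k \<Gamma> v w \<and> u \<in> set (walk_verts k v w)}"

end

theory Submission
  imports Defs "HOL-Library.Sublist"
begin

(*
  Suppose f \<in> H1 - H2, and let O = {h H2 | h \<in> H1} be the H1-orbit of the base vertex H2 of
  the Schreier graph of H2.  Since G \<le> H1 \<inter> H2, the map h G \<mapsto> h H2 has fibres of equal size,
  so |O| divides [H1 : G]; and |O| \<noteq> 1 because f H2 \<noteq> H2.  Write f = u c u\<^sup>-\<^sup>1 with c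
  cyclically reduced.  For h \<in> H1 some power (h\<^sup>-\<^sup>1 f h)\<^sup>m lies in G \<le> H2, i.e. the cyclically
  reduced word c\<^sup>m labels a closed walk at u\<^sup>-\<^sup>1 h H2.  Hence u\<^sup>-\<^sup>1 O lies in the core and
  |O| \<le> |V(Core(H2))|, contradicting the assumption on the divisors of [H1 : G].

  The core of a finitely generated subgroup H is finite: the shortest representative of a core
  vertex y H is a suffix of an element of H, and the cosets of such suffixes are cosets of
  suffixes of the generators and their inverses.
*)

section \<open>Reduced words\<close>

lemma inv_letter_inv [simp]: "inv_letter (inv_letter x) = x"
  by (simp add: inv_letter_def)

lemma inv_letter_neq [simp]: "inv_letter x \<noteq> x" "x \<noteq> inv_letter x"
  by (cases x, simp add: inv_letter_def)+

lemma inv_letter_eq_iff: "inv_letter x = y \<longleftrightarrow> x = inv_letter y"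
  by auto

lemma fst_inv_letter [simp]: "fst (inv_letter x) = fst x"
  by (simp add: inv_letter_def)

definition inv_word :: "letter list \<Rightarrow> letter list" where
  "inv_word w = rev (map inv_letter w)"

lemma inv_word_simps [simp]:
  "inv_word [] = []"
  "inv_word (x # w) = inv_word w @ [inv_letter x]"
  "inv_word (u @ v) = inv_word v @ inv_word u"
  "inv_word (inv_word w) = w"
  "length (inv_word w) = length w"
  "inv_word w = [] \<longleftrightarrow> w = []"
  by (auto simp: inv_word_def rev_map[symmetric] comp_def)

lemma last_inv_word: "w \<noteq> [] \<Longrightarrow> last (inv_word w) = inv_letter (hd w)"
  by (simp add: inv_word_def last_rev hd_map)

lemma set_inv_word [simp]: "set (inv_word w) = inv_letter ` set w"
  by (simp add: inv_word_def)

lemma reduced_Cons: "reduced (x # w) \<longleftrightarrow> reduced w \<and> (w = [] \<or> hd w \<noteq> inv_letter x)"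
  by (cases w) auto

lemma reduced_append:
  "reduced (u @ v) \<longleftrightarrow> reduced u \<and> reduced v \<and> (u = [] \<or> v = [] \<or> hd v \<noteq> inv_letter (last u))"
  by (induction u) (auto simp: reduced_Cons)

lemma reduced_rev: "reduced (rev w) \<longleftrightarrow> reduced w"
proof (induction w)
  case (Cons x w)
  then show ?case
    by (cases w) (auto simp: reduced_append reduced_Cons inv_letter_eq_iff)
qed simp

lemma reduced_inv_word [simp]: "reduced (inv_word w) \<longleftrightarrow> reduced w"
proof -
  have "reduced (map inv_letter w) \<longleftrightarrow> reduced w"
    by (induction w) (auto simp: reduced_Cons hd_map inv_letter_eq_iff)
  then show ?thesis
    by (simp add: inv_word_def reduced_rev)
qed

lemma reduced_foldr_red_cons: "reduced r \<Longrightarrow> reduced (foldr red_cons u r)"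
proof (induction u)
  case (Cons x u)
  then show ?case
    by (cases "foldr red_cons u r") (auto simp: reduced_Cons)
qed simp

lemma reduced_red [simp]: "reduced (red w)"
  by (simp add: red_def reduced_foldr_red_cons)

lemma red_Nil [simp]: "red [] = []"
  by (simp add: red_def)

lemma red_Cons: "red (x # w) = red_cons x (red w)"
  by (simp add: red_def)

lemma red_reduced: "reduced w \<Longrightarrow> red w = w"
proof (induction w)
  case (Cons x w)
  then show ?case
    by (cases w) (auto simp: reduced_Cons red_Cons)
qed simp

lemma red_append: "red (u @ v) = foldr red_cons u (red v)"
  by (simp add: red_def)

lemma red_cons_no_cancel: "w = [] \<or> hd w \<noteq> inv_letter x \<Longrightarrow> red_cons x w = x # w"
  by (cases w) auto

lemma red_cons_cancel: "reduced r \<Longrightarrow> red_cons x (red_cons (inv_letter x) r) = r"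
  by (cases r) (auto simp: reduced_Cons red_cons_no_cancel)

lemma foldr_red_cons_red_cons:
  assumes "reduced s" "reduced r"
  shows "foldr red_cons (red_cons x s) r = red_cons x (foldr red_cons s r)"
proof (cases s)
  case (Cons y s')
  then show ?thesis
    using red_cons_cancel[OF reduced_foldr_red_cons[OF assms(2)], of x s']
    by auto
qed simp

lemma red_append_left [simp]: "red (red u @ v) = red (u @ v)"
proof -
  have "foldr red_cons (red u) r = foldr red_cons u r" if "reduced r" for r
    using that by (induction u) (simp_all add: red_Cons foldr_red_cons_red_cons)
  then show ?thesis
    by (simp add: red_append)
qed

lemma red_append_right [simp]: "red (u @ red v) = red (u @ v)"
  by (simp add: red_append red_reduced)

lemma red_inv_word_append [simp]: "red (inv_word w @ w) = []"
proof (induction w)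
  case (Cons x w)
  have "red (inv_word (x # w) @ x # w)
      = foldr red_cons (inv_word w) (red_cons (inv_letter x) (red_cons x (red w)))"
    by (simp add: red_append red_Cons)
  also have "\<dots> = red (inv_word w @ w)"
    using red_cons_cancel[of "red w" "inv_letter x"] by (simp add: red_append)
  finally show ?case
    using Cons.IH by simp
qed simp

lemma red_append_inv_word [simp]: "red (w @ inv_word w) = []"
  using red_inv_word_append[of "inv_word w"] by simp

lemma set_red: "set (red w) \<subseteq> set w"
proof -
  have "set (red_cons x r) \<subseteq> insert x (set r)" for x r
    by (cases r) auto
  then have "set (foldr red_cons u r) \<subseteq> set u \<union> set r" for u r
    by (induction u) fastforce+
  then show ?thesis
    by (metis red_def empty_set sup_bot.right_neutral)
qed

lemma red_append_cancellation:
  assumes "reduced u" "reduced v"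
  shows "\<exists>a b c. u = a @ b \<and> v = inv_word b @ c \<and> red (u @ v) = a @ c"
  using assms(1)
proof (induction u)
  case Nil
  then show ?case
    using assms(2) by (auto simp: red_reduced)
next
  case (Cons x u)
  then obtain a b c where abc: "u = a @ b" "v = inv_word b @ c" "red (u @ v) = a @ c"
    by (auto simp: reduced_Cons)
  have red_xuv: "red ((x # u) @ v) = red_cons x (a @ c)"
    using abc(3) by (simp add: red_Cons)
  show ?case
  proof (cases "a = [] \<and> c \<noteq> [] \<and> hd c = inv_letter x")
    case True
    then obtain c' where "c = inv_letter x # c'"
      by (cases c) auto
    then show ?thesis
      using red_xuv abc True by (intro exI[of _ "[]"] exI[of _ "x # b"] exI[of _ c']) auto
  next
    case False
    then have "red_cons x (a @ c) = x # a @ c"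
      using Cons.prems abc(1) by (intro red_cons_no_cancel) (cases a; auto simp: reduced_Cons)
    then show ?thesis
      using red_xuv abc by (intro exI[of _ "x # a"] exI[of _ b] exI[of _ c]) auto
  qed
qed

lemma suffix_foldr_red_cons:
  assumes "suffix s (foldr red_cons u v)"
  shows "suffix s v \<or> (\<exists>s'. suffix s' u \<and> s = foldr red_cons s' v)"
  using assms
proof (induction u)
  case (Cons x u)
  show ?case
  proof (cases "foldr red_cons u v = [] \<or> hd (foldr red_cons u v) \<noteq> inv_letter x")
    case True
    then have "suffix s (x # foldr red_cons u v)"
      using Cons.prems by (simp add: red_cons_no_cancel)
    then have "s = x # foldr red_cons u v \<or> suffix s (foldr red_cons u v)"
      by (auto simp: suffix_def Cons_eq_append_conv)
    then show ?thesis
      using Cons.IH True by (auto simp: red_cons_no_cancel intro: suffix_ConsI)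
  next
    case False
    then have "suffix s (foldr red_cons u v)"
      using Cons.prems by (cases "foldr red_cons u v") (auto intro: suffix_ConsI)
    then show ?thesis
      using Cons.IH by (auto intro: suffix_ConsI)
  qed
qed simp

section \<open>The free group\<close>

lemma free_group_carrier: "w \<in> carrier (free_group k) \<longleftrightarrow> reduced w \<and> (\<forall>x\<in>set w. fst x < k)"
  by (simp add: free_group_def)

lemma free_group_mult: "u \<otimes>\<^bsub>free_group k\<^esub> v = red (u @ v)"
  by (simp add: free_group_def)

lemma free_group_one: "\<one>\<^bsub>free_group k\<^esub> = []"
  by (simp add: free_group_def)

lemma red_in_carrier: "\<forall>x\<in>set w. fst x < k \<Longrightarrow> red w \<in> carrier (free_group k)"
  using set_red[of w] by (auto simp: free_group_carrier)

lemma inv_word_in_carrier: "w \<in> carrier (free_group k) \<Longrightarrow> inv_word w \<in> carrier (free_group k)"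
  by (simp add: free_group_carrier)

lemma append_in_carrierD:
  "u @ v \<in> carrier (free_group k) \<Longrightarrow> u \<in> carrier (free_group k) \<and> v \<in> carrier (free_group k)"
  by (auto simp: free_group_carrier reduced_append)

lemma group_free_group: "group (free_group k)"
proof (rule groupI)
  fix u v
  assume "u \<in> carrier (free_group k)" "v \<in> carrier (free_group k)"
  then show "u \<otimes>\<^bsub>free_group k\<^esub> v \<in> carrier (free_group k)"
    using set_red[of "u @ v"] by (auto simp: free_group_carrier free_group_mult)
next
  fix u
  assume "u \<in> carrier (free_group k)"
  then show "\<exists>v\<in>carrier (free_group k). v \<otimes>\<^bsub>free_group k\<^esub> u = \<one>\<^bsub>free_group k\<^esub>"
    by (intro bexI[of _ "inv_word u"]) (simp_all add: free_group_mult free_group_one inv_word_in_carrier)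
qed (auto simp: free_group_carrier free_group_mult free_group_one red_reduced)

interpretation fg: group "free_group k" for k
  by (rule group_free_group)

lemma free_group_inv: "w \<in> carrier (free_group k) \<Longrightarrow> inv\<^bsub>free_group k\<^esub> w = inv_word w"
  by (rule fg.inv_equality) (auto simp: free_group_mult free_group_one intro: inv_word_in_carrier)

section \<open>Cyclically reduced words\<close>

lemma cyclically_reduced_rev: "cyclically_reduced w \<Longrightarrow> cyclically_reduced (rev w)"
  by (auto simp: cyclically_reduced_def reduced_rev hd_rev last_rev inv_letter_eq_iff)

lemma cyclically_reduced_rotate: "cyclically_reduced (u @ v) \<Longrightarrow> cyclically_reduced (v @ u)"
  by (cases "u = [] \<or> v = []") (auto simp: cyclically_reduced_def reduced_append)

lemma reduced_word_cyclic_decomposition: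
  assumes "reduced f" "f \<noteq> []"
  shows "\<exists>u c. c \<noteq> [] \<and> cyclically_reduced c \<and> f = u @ c @ inv_word u"
  using assms
proof (induction "length f" arbitrary: f rule: less_induct)
  case less
  show ?case
  proof (cases "cyclically_reduced f")
    case True
    then show ?thesis
      using less.prems by (intro exI[of _ "[]"] exI[of _ f]) auto
  next
    case False
    then have ends: "hd f = inv_letter (last f)"
      using less.prems by (simp add: cyclically_reduced_def)
    obtain x t y where "f = x # t @ [y]"
      using less.prems ends by (cases f; cases "tl f" rule: rev_cases) auto
    then have f: "f = [x] @ t @ [inv_letter x]"
      using ends by simp
    then have "reduced t" "t \<noteq> []"
      using less.prems(1) by (auto simp: reduced_Cons reduced_append)
    then obtain u c where "c \<noteq> [] \<and> cyclically_reduced c \<and> t = u @ c @ inv_word u"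
      using less.hyps[of t] f by auto
    then show ?thesis
      using f by (intro exI[of _ "x # u"] exI[of _ c]) auto
  qed
qed

lemma cyclically_reduced_concat_replicate:
  assumes "cyclically_reduced c"
  shows "cyclically_reduced (concat (replicate n c))"
proof -
  have "reduced (concat (replicate n c)) \<and>
    (n > 0 \<longrightarrow> hd (concat (replicate n c)) = hd c \<and> last (concat (replicate n c)) = last c)"
    if "c \<noteq> []"
  proof (induction n)
    case (Suc n)
    then show ?case
      using assms \<open>c \<noteq> []\<close> by (cases n) (auto simp: cyclically_reduced_def reduced_append)
  qed simp
  then show ?thesis
    using assms by (cases "c = [] \<or> n = 0") (auto simp: cyclically_reduced_def)
qed

lemma free_group_nat_pow_cyclically_reduced:
  assumes "cyclically_reduced c"
  shows "c [^]\<^bsub>free_group k\<^esub> (n::nat) = concat (replicate n c)"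
proof (induction n)
  case (Suc n)
  have "concat (replicate n c) @ c = concat (replicate (Suc n) c)"
    by (induction n) auto
  then show ?case
    using Suc cyclically_reduced_concat_replicate[OF assms, of "Suc n"]
    by (simp add: free_group_mult red_reduced cyclically_reduced_def)
qed (simp add: free_group_one)

lemma reduced_append_or_inv_word_append:
  assumes "cyclically_reduced z" "z \<noteq> []" "reduced y"
  shows "reduced (z @ y) \<or> reduced (inv_word z @ y)"
  using assms last_inv_word[OF assms(2)]
  by (cases y) (auto simp: cyclically_reduced_def reduced_append inv_letter_eq_iff)

section \<open>Cosets\<close>

(* Otherwise the ASCII notation for strict multiset inclusion makes h <# K ambiguous. *)
no_notation (ASCII) subset_mset (infix \<open><#\<close> 50)

lemma card_eq_card_image_mult_fibre:
  assumes "finite A" "\<And>y. y \<in> f ` A \<Longrightarrow> card {x \<in> A. f x = y} = m"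
  shows "card A = card (f ` A) * m"
proof -
  have "card A = (\<Sum>y\<in>f ` A. card {x \<in> A. f x = y})"
    unfolding card_eq_sum by (rule sum.image_gen[OF assms(1)])
  also have "\<dots> = (\<Sum>y\<in>f ` A. m)"
    using assms(2) by (intro sum.cong) auto
  finally show ?thesis
    by simp
qed

context group
begin

lemma l_coset_eq_iff:
  assumes "subgroup H G" "a \<in> carrier G" "b \<in> carrier G"
  shows "a <# H = b <# H \<longleftrightarrow> inv a \<otimes> b \<in> H"
  using assms eq_equiv_class_iff[OF subgroup.equiv_rcong[OF assms(1) is_group]]
  by (simp add: subgroup.l_coset_eq_rcong[OF assms(1) is_group] r_congruent_def)

lemma l_coset_inv_fixed:
  assumes "M \<subseteq> carrier G" "g \<in> carrier G" "g <# M = M"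
  shows "inv g <# M = M"
proof -
  have "inv g <# M = inv g <# (g <# M)"
    using assms(3) by simp
  also have "\<dots> = M"
    using assms(1,2) by (simp add: lcos_m_assoc lcos_mult_one)
  finally show ?thesis .
qed

lemma conj_nat_pow:
  assumes "a \<in> carrier G" "x \<in> carrier G"
  shows "(inv a \<otimes> x \<otimes> a) [^] (n::nat) = inv a \<otimes> x [^] n \<otimes> a"
proof (induction n)
  case (Suc n)
  have "(inv a \<otimes> x \<otimes> a) [^] Suc n = inv a \<otimes> x [^] n \<otimes> (a \<otimes> inv a) \<otimes> x \<otimes> a"
    using Suc assms by (simp add: m_assoc del: r_inv Units_r_inv)
  also have "\<dots> = inv a \<otimes> x [^] Suc n \<otimes> a"
    using assms by (simp add: m_assoc)
  finally show ?case .
qed (use assms in simp)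

lemma subgroup_nat_pow_closed:
  assumes "subgroup H G" "h \<in> H"
  shows "h [^] (n::nat) \<in> H"
  using subgroup_int_pow_closed[OF assms, of "int n"] by (simp add: int_pow_int)

lemma set_inv_eq_image: "set_inv C = (\<lambda>c. inv c) ` C"
  by (auto simp: SET_INV_def)

lemma set_inv_set_inv: "C \<subseteq> carrier G \<Longrightarrow> set_inv (set_inv C) = C"
  unfolding set_inv_eq_image image_image by (auto simp: subsetD image_iff intro: bexI[of _ "inv c" for c])

lemma image_inv_subgroup:
  assumes "subgroup K G"
  shows "(\<lambda>c. inv c) ` K = K"
proof
  show "(\<lambda>c. inv c) ` K \<subseteq> K"
    using subgroup.m_inv_closed[OF assms] by blast
  show "K \<subseteq> (\<lambda>c. inv c) ` K"
  proof
    fix k assume "k \<in> K"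
    then show "k \<in> (\<lambda>c. inv c) ` K"
      using subgroup.m_inv_closed[OF assms] subgroup.mem_carrier[OF assms]
      by (intro image_eqI[of _ _ "inv k"]) simp_all
  qed
qed

lemma set_inv_r_coset:
  assumes "subgroup K G" "h \<in> carrier G"
  shows "set_inv (K #> h) = inv h <# K"
proof -
  have "set_inv (K #> h) = (\<lambda>k. inv (k \<otimes> h)) ` K"
    by (simp add: set_inv_eq_image r_coset_def UNION_singleton_eq_range image_image)
  also have "\<dots> = (\<lambda>k. inv h \<otimes> k) ` (\<lambda>c. inv c) ` K"
    unfolding image_image using assms(2) subgroup.mem_carrier[OF assms(1)]
    by (intro image_cong) (auto simp: inv_mult_group)
  finally show ?thesis
    by (simp add: image_inv_subgroup[OF assms(1)] l_coset_def UNION_singleton_eq_range)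
qed

lemma bij_betw_set_inv_rcosets_l_cosets:
  assumes "subgroup H G" "subgroup K G"
  shows "bij_betw (\<lambda>C. set_inv C) (rcosets\<^bsub>G\<lparr>carrier := H\<rparr>\<^esub> K) ((\<lambda>h. h <# K) ` H)"
proof -
  have H: "h \<in> H \<Longrightarrow> h \<in> carrier G" "h \<in> H \<Longrightarrow> inv h \<in> H" for h
    using subgroup.mem_carrier[OF assms(1)] subgroup.m_inv_closed[OF assms(1)] by simp_all
  have K: "K \<subseteq> carrier G"
    using subgroup.subset[OF assms(2)] .
  have rcosets: "rcosets\<^bsub>G\<lparr>carrier := H\<rparr>\<^esub> K = (\<lambda>h. K #> h) ` H"
    by (auto simp: RCOSETS_def)
  show ?thesis
    unfolding rcosets
  proof (rule bij_betw_byWitness[where f' = "\<lambda>C. set_inv C"])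
    show "\<forall>C\<in>(\<lambda>h. K #> h) ` H. set_inv (set_inv C) = C"
      using K H(1) by (simp add: set_inv_set_inv r_coset_subset_G)
    show "\<forall>C\<in>(\<lambda>h. h <# K) ` H. set_inv (set_inv C) = C"
      using K H(1) by (simp add: set_inv_set_inv l_coset_subset_G)
    show "(\<lambda>C. set_inv C) ` (\<lambda>h. K #> h) ` H \<subseteq> (\<lambda>h. h <# K) ` H"
      using H set_inv_r_coset[OF assms(2)] by auto
    show "(\<lambda>C. set_inv C) ` (\<lambda>h. h <# K) ` H \<subseteq> (\<lambda>h. K #> h) ` H"
    proof clarify
      fix h assume h: "h \<in> H"
      then have "set_inv (h <# K) = K #> inv h"
        using H set_inv_r_coset[OF assms(2), of "inv h"] set_inv_set_inv[of "K #> inv h"] K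
          r_coset_subset_G
        by simp
      then show "set_inv (h <# K) \<in> (\<lambda>h. K #> h) ` H"
        using H h by blast
    qed
  qed
qed

lemma nat_pow_in_subgroup_of_finite_index:
  assumes "subgroup H G" "subgroup K G" "finite ((\<lambda>h. h <# K) ` H)" "x \<in> H"
  shows "\<exists>m>0. x [^] (m::nat) \<in> K"
proof -
  have x: "x \<in> carrier G"
    using subgroup.mem_carrier[OF assms(1,4)] .
  have "range (\<lambda>i::nat. x [^] i <# K) \<subseteq> (\<lambda>h. h <# K) ` H"
    using subgroup_nat_pow_closed[OF assms(1,4)] by blast
  then have "\<not> inj (\<lambda>i::nat. x [^] i <# K)"
    using assms(3) range_inj_infinite finite_subset by metis
  then obtain i j :: nat where "i \<noteq> j" "x [^] i <# K = x [^] j <# K"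
    unfolding inj_def by blast
  then obtain i j :: nat where ij: "i < j" "x [^] i <# K = x [^] j <# K"
    by (metis linorder_neq_iff)
  then have "inv (x [^] i) \<otimes> x [^] j \<in> K"
    using l_coset_eq_iff[OF assms(2)] x by simp
  moreover have "x [^] j = x [^] i \<otimes> x [^] (j - i)"
    using ij(1) x by (simp add: nat_pow_mult)
  then have "inv (x [^] i) \<otimes> x [^] j = x [^] (j - i)"
    using x by (simp add: m_assoc[symmetric])
  ultimately show ?thesis
    using ij(1) by (intro exI[of _ "j - i"]) simp
qed

lemma l_coset_set_mult_subgroup:
  assumes "subgroup K G" "subgroup L G" "K \<subseteq> L" "h \<in> carrier G"
  shows "(h <# K) <#> L = h <# L"
proof -
  have KL: "K \<subseteq> carrier G" "L \<subseteq> carrier G"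
    using subgroup.subset[OF assms(1)] subgroup.subset[OF assms(2)] .
  have "K <#> L = L"
  proof
    show "K <#> L \<subseteq> L"
      using mono_set_mult[OF assms(3), of L L G] subgroup_mult_id[OF assms(2)] by simp
    show "L \<subseteq> K <#> L"
    proof
      fix l assume "l \<in> L"
      then have "l = \<one> \<otimes> l"
        using KL by (simp add: subsetD)
      then show "l \<in> K <#> L"
        using \<open>l \<in> L\<close> subgroup.one_closed[OF assms(1)] unfolding set_mult_def by blast
    qed
  qed
  then show ?thesis
    using setmult_lcos_assoc[OF KL assms(4)] by simp
qed

lemma l_coset_fibre_translate:
  assumes H: "subgroup H G" and KL: "subgroup K G" "subgroup L G" "K \<subseteq> L" and g: "g \<in> H"
  defines "fibre \<equiv> \<lambda>M. {C \<in> (\<lambda>h. h <# K) ` H. C <#> L = M}"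
  shows "fibre (g <# L) = (\<lambda>C. g <# C) ` fibre L"
proof -
  have h: "h \<in> H \<Longrightarrow> h \<in> carrier G" "h \<in> H \<Longrightarrow> inv h \<in> H"
    "h \<in> H \<Longrightarrow> h' \<in> H \<Longrightarrow> h \<otimes> h' \<in> H" for h h'
    using subgroup.mem_carrier[OF H] subgroup.m_inv_closed[OF H] subgroup.m_closed[OF H] by simp_all
  have carrier: "K \<subseteq> carrier G" "L \<subseteq> carrier G"
    using subgroup.subset[OF KL(1)] subgroup.subset[OF KL(2)] .
  note project = l_coset_set_mult_subgroup[OF KL]
  show ?thesis
  proof
    show "(\<lambda>C. g <# C) ` fibre L \<subseteq> fibre (g <# L)"
    proof (rule image_subsetI)
      fix C assume "C \<in> fibre L"
      then obtain h where "h \<in> H" "C = h <# K" "h <# L = L"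
        using h project by (auto simp: fibre_def)
      moreover have "g <# (h <# K) = (g \<otimes> h) <# K" "(g \<otimes> h) <# L = g <# (h <# L)"
        using g \<open>h \<in> H\<close> h carrier by (simp_all add: lcos_m_assoc)
      ultimately show "g <# C \<in> fibre (g <# L)"
        using g h project by (auto simp: fibre_def)
    qed
    show "fibre (g <# L) \<subseteq> (\<lambda>C. g <# C) ` fibre L"
    proof
      fix C assume "C \<in> fibre (g <# L)"
      then obtain h' where h': "h' \<in> H" "C = h' <# K" "h' <# L = g <# L"
        using h project by (auto simp: fibre_def)
      have "(inv g \<otimes> h') <# L = inv g <# (h' <# L)"
        using h'(1) g h carrier by (simp add: lcos_m_assoc)
      also have "\<dots> = L"
        using h'(3) g h carrier by (simp add: lcos_m_assoc lcos_mult_one)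
      finally have "(inv g \<otimes> h') <# K \<in> fibre L"
        using h' g h project by (auto simp: fibre_def)
      moreover have "C = g <# ((inv g \<otimes> h') <# K)"
        using h' g h carrier by (simp add: lcos_m_assoc m_assoc[symmetric] lcos_mult_one)
      ultimately show "C \<in> (\<lambda>C. g <# C) ` fibre L"
        by (rule rev_image_eqI)
    qed
  qed
qed

lemma card_l_coset_image_dvd:
  assumes H: "subgroup H G" and KL: "subgroup K G" "subgroup L G" "K \<subseteq> L"
    and fin: "finite ((\<lambda>h. h <# K) ` H)"
  shows "card ((\<lambda>h. h <# L) ` H) dvd card ((\<lambda>h. h <# K) ` H)"
proof -
  let ?fibre = "\<lambda>M. {C \<in> (\<lambda>h. h <# K) ` H. C <#> L = M}"
  have h: "h \<in> H \<Longrightarrow> h \<in> carrier G" for h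
    using subgroup.mem_carrier[OF H] by simp
  have fibre_card: "card (?fibre (g <# L)) = card (?fibre L)" if g: "g \<in> H" for g
  proof -
    have "inj_on (\<lambda>C. g <# C) (?fibre L)"
    proof (rule inj_on_inverseI)
      fix C assume "C \<in> ?fibre L"
      then obtain h where "h \<in> H" "C = h <# K"
        by auto
      then show "inv g <# (g <# C) = C"
        using g h subgroup.subset[OF KL(1)] by (simp add: lcos_m_assoc m_assoc[symmetric] lcos_mult_one)
    qed
    then show ?thesis
      using card_image l_coset_fibre_translate[OF H KL g] by simp
  qed
  have image: "(\<lambda>C. C <#> L) ` (\<lambda>h. h <# K) ` H = (\<lambda>h. h <# L) ` H"
    using h l_coset_set_mult_subgroup[OF KL] by (simp add: image_image cong: image_cong)
  have "card ((\<lambda>h. h <# K) ` H) = card ((\<lambda>C. C <#> L) ` (\<lambda>h. h <# K) ` H) * card (?fibre L)"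
  proof (rule card_eq_card_image_mult_fibre[OF fin])
    fix M assume "M \<in> (\<lambda>C. C <#> L) ` (\<lambda>h. h <# K) ` H"
    then obtain g where "g \<in> H" "M = g <# L"
      unfolding image by blast
    then show "card (?fibre M) = card (?fibre L)"
      using fibre_card by simp
  qed
  then show ?thesis
    unfolding image by simp
qed

lemma card_l_coset_image_neq_one:
  assumes "subgroup H G" "subgroup L G" "f \<in> H" "f \<notin> L"
  shows "card ((\<lambda>h. h <# L) ` H) \<noteq> 1"
proof
  assume "card ((\<lambda>h. h <# L) ` H) = 1"
  moreover have "L \<in> (\<lambda>h. h <# L) ` H"
    using subgroup.one_closed[OF assms(1)] lcos_mult_one[OF subgroup.subset[OF assms(2)]] by force
  moreover have "f <# L \<in> (\<lambda>h. h <# L) ` H"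
    using assms(3) by blast
  ultimately have "f <# L = L"
    by (metis card_1_singletonE singletonD)
  then show False
    using lcos_self[OF subgroup.mem_carrier[OF assms(1,3)] assms(2)] assms(4) by simp
qed

end

section \<open>Closed walks in the Schreier graph\<close>

lemma walk_verts_not_Nil [simp]: "walk_verts k v w \<noteq> []"
  by (cases w) auto

lemma start_in_walk_verts: "v \<in> set (walk_verts k v w)"
  by (cases w) auto

(* Letters act by left multiplication, so along a walk they compose in reverse order. *)
lemma last_walk_verts:
  assumes "v \<subseteq> carrier (free_group k)" "\<forall>x\<in>set w. fst x < k"
  shows "last (walk_verts k v w) = red (rev w) <#\<^bsub>free_group k\<^esub> v"
  using assms
proof (induction w arbitrary: v)
  case Nil
  then show ?case
    using fg.lcos_mult_one[of v k] by (simp add: free_group_one)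
next
  case (Cons x w)
  have x: "[x] \<in> carrier (free_group k)"
    using Cons.prems(2) by (simp add: free_group_carrier)
  have "last (walk_verts k v (x # w)) = red (rev w) <#\<^bsub>free_group k\<^esub> ([x] <#\<^bsub>free_group k\<^esub> v)"
    using Cons fg.l_coset_subset_G[OF Cons.prems(1) x] by (simp add: letter_act_def)
  also have "\<dots> = (red (rev w) \<otimes>\<^bsub>free_group k\<^esub> [x]) <#\<^bsub>free_group k\<^esub> v"
    using Cons.prems x by (intro fg.lcos_m_assoc) (simp_all add: red_in_carrier)
  finally show ?case
    by (simp add: free_group_mult)
qed

lemma in_walk_verts_imp_prefix:
  assumes "u \<in> set (walk_verts k v w)"
  shows "\<exists>w1 w2. w = w1 @ w2 \<and> u = last (walk_verts k v w1)"
  using assms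
proof (induction w arbitrary: v)
  case (Cons x w)
  show ?case
  proof (cases "u = v")
    case False
    then have "u \<in> set (walk_verts k (letter_act k x v) w)"
      using Cons.prems by simp
    then obtain w1 w2 where "w = w1 @ w2" "u = last (walk_verts k (letter_act k x v) w1)"
      using Cons.IH by blast
    then show ?thesis
      by (intro exI[of _ "x # w1"] exI[of _ w2]) simp
  qed (intro exI[of _ "[]"] exI[of _ "x # w"], simp)
qed simp

lemma schreier_vertex_subset_carrier:
  assumes "subgroup H (free_group k)" "v \<in> schreier_vertices k H"
  shows "v \<subseteq> carrier (free_group k)"
proof -
  obtain g where "g \<in> carrier (free_group k)" "v = g <#\<^bsub>free_group k\<^esub> H"
    using assms(2) by (auto simp: schreier_vertices_def)
  then show ?thesis
    using fg.l_coset_subset_G[OF subgroup.subset[OF assms(1)]] by simp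
qed

lemma core_vertex_stabiliser:
  assumes H: "subgroup H (free_group k)" and u: "u \<in> core_vertices k H"
  shows "u \<in> schreier_vertices k H"
    and "\<exists>z\<in>carrier (free_group k). z \<noteq> [] \<and> cyclically_reduced z \<and> z <#\<^bsub>free_group k\<^esub> u = u"
proof -
  obtain v w where cycle: "schreier_cycle k H v w" and u_on_cycle: "u \<in> set (walk_verts k v w)"
    using u by (auto simp: core_vertices_def)
  then have v: "v \<in> schreier_vertices k H" and w: "\<forall>x\<in>set w. fst x < k" "w \<noteq> []"
    "cyclically_reduced w" "last (walk_verts k v w) = v"
    by (auto simp: schreier_cycle_def)
  obtain w1 w2 where w12: "w = w1 @ w2" and u1: "u = last (walk_verts k v w1)"
    using in_walk_verts_imp_prefix[OF u_on_cycle] by blast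
  define e1 e2 where "e1 = red (rev w1)" and "e2 = red (rev w2)"
  have e: "e1 \<in> carrier (free_group k)" "e2 \<in> carrier (free_group k)"
    using w(1) w12 by (auto simp: e1_def e2_def intro!: red_in_carrier)
  have u_e1: "u = e1 <#\<^bsub>free_group k\<^esub> v"
    using u1 last_walk_verts[OF schreier_vertex_subset_carrier[OF H v]] w(1) w12 by (simp add: e1_def)
  have v_e: "(e2 \<otimes>\<^bsub>free_group k\<^esub> e1) <#\<^bsub>free_group k\<^esub> v = v"
    using w(1,4) last_walk_verts[OF schreier_vertex_subset_carrier[OF H v]] w12
    by (simp add: free_group_mult e1_def e2_def)
  show "u \<in> schreier_vertices k H"
    using v e(1) subgroup.subset[OF H] by (auto simp: schreier_vertices_def u_e1 fg.lcos_m_assoc)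
  \<comment> \<open>\<open>z\<close> acts on \<open>u\<close> as the walk once around the cycle starting at \<open>u\<close>\<close>
  define z where "z = rev (w2 @ w1)"
  have z: "cyclically_reduced z" "z \<noteq> []"
    using cyclically_reduced_rev[OF cyclically_reduced_rotate[of w1 w2]] w(2,3) w12
    by (auto simp: z_def)
  have z_carrier: "z \<in> carrier (free_group k)"
    using z(1) w(1) w12 by (auto simp: z_def free_group_carrier cyclically_reduced_def)
  then have "z = e1 \<otimes>\<^bsub>free_group k\<^esub> e2"
    by (simp add: z_def e1_def e2_def free_group_mult red_reduced free_group_carrier)
  then have "z <#\<^bsub>free_group k\<^esub> u = e1 <#\<^bsub>free_group k\<^esub> ((e2 \<otimes>\<^bsub>free_group k\<^esub> e1) <#\<^bsub>free_group k\<^esub> v)"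
    using e schreier_vertex_subset_carrier[OF H v] by (simp add: u_e1 fg.lcos_m_assoc fg.m_assoc)
  then have "z <#\<^bsub>free_group k\<^esub> u = u"
    using v_e u_e1 by simp
  then show "\<exists>z\<in>carrier (free_group k). z \<noteq> [] \<and> cyclically_reduced z \<and> z <#\<^bsub>free_group k\<^esub> u = u"
    using z z_carrier by blast
qed

lemma core_verticesI:
  assumes H: "subgroup H (free_group k)" and u: "u \<in> schreier_vertices k H"
    and z: "z \<in> carrier (free_group k)" "z \<noteq> []" "cyclically_reduced z" "z <#\<^bsub>free_group k\<^esub> u = u"
  shows "u \<in> core_vertices k H"
proof -
  have "last (walk_verts k u (rev z)) = u"
    using z last_walk_verts[OF schreier_vertex_subset_carrier[OF H u], of "rev z"]
    by (simp add: free_group_carrier red_reduced)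
  then have "schreier_cycle k H u (rev z)"
    using u z by (auto simp: schreier_cycle_def free_group_carrier cyclically_reduced_rev)
  then show ?thesis
    unfolding core_vertices_def using start_in_walk_verts by blast
qed

section \<open>Finiteness of the core\<close>

lemma suffix_free_group_mult:
  assumes "u \<in> carrier (free_group k)" "v \<in> carrier (free_group k)"
    and "suffix s (u \<otimes>\<^bsub>free_group k\<^esub> v)"
  shows "suffix s v \<or> (\<exists>s'. suffix s' u \<and> s' \<in> carrier (free_group k) \<and> s = s' \<otimes>\<^bsub>free_group k\<^esub> v)"
proof -
  have red_v: "red v = v"
    using assms(2) by (simp add: free_group_carrier red_reduced)
  have "suffix s (foldr red_cons u v)"
    using assms(3) red_v by (simp add: free_group_mult red_append)
  then have "suffix s v \<or> (\<exists>s'. suffix s' u \<and> s = foldr red_cons s' v)"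
    by (rule suffix_foldr_red_cons)
  moreover have "s' \<in> carrier (free_group k)" if "suffix s' u" for s'
    using that assms(1) append_in_carrierD unfolding suffix_def by blast
  moreover have "foldr red_cons s' v = s' \<otimes>\<^bsub>free_group k\<^esub> v" for s'
    using red_v by (simp add: free_group_mult red_append)
  ultimately show ?thesis
    by auto
qed

lemma l_coset_suffix_generate:
  assumes S: "S \<subseteq> carrier (free_group k)"
    and "g \<in> generate (free_group k) S" "suffix s g"
  shows "s <#\<^bsub>free_group k\<^esub> generate (free_group k) S
    \<in> (\<lambda>s. s <#\<^bsub>free_group k\<^esub> generate (free_group k) S) ` {s. \<exists>t\<in>insert [] (S \<union> inv_word ` S). suffix s t}"
  using assms(2,3)
proof (induction g arbitrary: s rule: generate.induct)
  case one
  then show ?case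
    by (auto simp: free_group_one)
next
  case (incl h)
  then show ?case
    by blast
next
  case (inv h)
  then show ?case
    using S free_group_inv[of h k] by blast
next
  case (eng h1 h2)
  let ?H = "generate (free_group k) S"
  have H: "subgroup ?H (free_group k)"
    using fg.generate_is_subgroup[OF S] .
  have h: "h1 \<in> carrier (free_group k)" "h2 \<in> carrier (free_group k)"
    using eng.hyps fg.generate_in_carrier[OF S] by blast+
  from suffix_free_group_mult[OF h eng.prems] show ?case
  proof
    assume "suffix s h2"
    then show ?thesis
      by (rule eng.IH(2))
  next
    assume "\<exists>s'. suffix s' h1 \<and> s' \<in> carrier (free_group k) \<and> s = s' \<otimes>\<^bsub>free_group k\<^esub> h2"
    then obtain s' where s': "suffix s' h1" "s' \<in> carrier (free_group k)" "s = s' \<otimes>\<^bsub>free_group k\<^esub> h2"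
      by blast
    then have "s <#\<^bsub>free_group k\<^esub> ?H = s' <#\<^bsub>free_group k\<^esub> (h2 <#\<^bsub>free_group k\<^esub> ?H)"
      using h(2) subgroup.subset[OF H] by (simp add: fg.lcos_m_assoc)
    also have "\<dots> = s' <#\<^bsub>free_group k\<^esub> ?H"
      using fg.coset_join3[OF h(2) H eng.hyps(2)] by simp
    finally show ?thesis
      using eng.IH(1)[OF s'(1)] by simp
  qed
qed

lemma shortest_l_coset_rep_suffix:
  assumes H: "subgroup H (free_group k)" and y: "y \<in> carrier (free_group k)"
    and z: "z \<in> carrier (free_group k)" "z \<noteq> []" "reduced (z @ y)"
    and conj: "inv\<^bsub>free_group k\<^esub> y \<otimes>\<^bsub>free_group k\<^esub> (z \<otimes>\<^bsub>free_group k\<^esub> y) \<in> H"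
    and shortest: "\<forall>y'\<in>y <#\<^bsub>free_group k\<^esub> H. length y \<le> length y'"
  shows "suffix y (red (inv_word y @ z @ y))"
proof -
  obtain a b c where abc: "inv_word y = a @ b" "z @ y = inv_word b @ c"
    "red (inv_word y @ z @ y) = a @ c"
    using red_append_cancellation[of "inv_word y" "z @ y"] y z(3) by (auto simp: free_group_carrier)
  show ?thesis
  proof (cases "length z \<le> length b")
    case True
    \<comment> \<open>all of \<open>z\<close> cancels, so \<open>z\<^sup>-\<^sup>1 y\<close> is a shorter representative of \<open>y H\<close>\<close>
    then have "take (length z) (inv_word b) = z"
      using arg_cong[OF abc(2), of "take (length z)"] by simp
    then obtain p where "inv_word b = z @ p"
      by (metis append_take_drop_id)
    then have y_zp: "y = z @ p @ inv_word a"
      using arg_cong[OF abc(1), of inv_word] by simp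
    then have p_reduced: "reduced (p @ inv_word a)"
      using y by (simp add: free_group_carrier reduced_append)
    have "inv\<^bsub>free_group k\<^esub> z \<otimes>\<^bsub>free_group k\<^esub> y = red ((inv_word z @ z) @ p @ inv_word a)"
      using z(1) by (simp add: y_zp free_group_inv free_group_mult)
    also have "\<dots> = red (red (inv_word z @ z) @ p @ inv_word a)"
      by (rule red_append_left[symmetric])
    also have "\<dots> = p @ inv_word a"
      using p_reduced by (simp add: red_reduced)
    finally have "inv\<^bsub>free_group k\<^esub> z \<otimes>\<^bsub>free_group k\<^esub> y = p @ inv_word a" .
    moreover have "inv\<^bsub>free_group k\<^esub> z \<otimes>\<^bsub>free_group k\<^esub> y \<in> y <#\<^bsub>free_group k\<^esub> H"
    proof -
      have "inv\<^bsub>free_group k\<^esub> z \<otimes>\<^bsub>free_group k\<^esub> y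
          = y \<otimes>\<^bsub>free_group k\<^esub> inv\<^bsub>free_group k\<^esub> (inv\<^bsub>free_group k\<^esub> y \<otimes>\<^bsub>free_group k\<^esub> (z \<otimes>\<^bsub>free_group k\<^esub> y))"
        using y z(1) by (simp add: fg.inv_mult_group fg.m_assoc[symmetric])
      then show ?thesis
        using subgroup.m_inv_closed[OF H conj] by (auto simp: l_coset_def)
    qed
    ultimately have "length y \<le> length (p @ inv_word a)"
      using shortest by metis
    then show ?thesis
      using z(2) y_zp by simp
  next
    case False
    then have "take (length b) z = inv_word b"
      using arg_cong[OF abc(2), of "take (length b)"] by simp
    then obtain d where "z = inv_word b @ d"
      by (metis append_take_drop_id)
    then show ?thesis
      using abc by (auto simp: suffix_def)
  qed
qed

lemma core_vertex_shortest_rep_suffix: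
  assumes H: "subgroup H (free_group k)" and u: "u \<in> core_vertices k H"
    and y: "y \<in> u" and shortest: "\<forall>y'\<in>u. length y \<le> length y'"
  shows "\<exists>r\<in>H. suffix y r"
proof -
  obtain z where z: "z \<in> carrier (free_group k)" "z \<noteq> []" "cyclically_reduced z"
    "z <#\<^bsub>free_group k\<^esub> u = u"
    using core_vertex_stabiliser(2)[OF H u] by blast
  have u_vertex: "u \<in> schreier_vertices k H"
    using core_vertex_stabiliser(1)[OF H u] .
  obtain g where g: "g \<in> carrier (free_group k)" "u = g <#\<^bsub>free_group k\<^esub> H"
    using u_vertex by (auto simp: schreier_vertices_def)
  have y_carrier: "y \<in> carrier (free_group k)"
    using y schreier_vertex_subset_carrier[OF H u_vertex] by blast
  have u_y: "u = y <#\<^bsub>free_group k\<^esub> H"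
    using fg.l_repr_independence[OF _ g(1) H] y g(2) by simp
  have u_carrier: "u \<subseteq> carrier (free_group k)"
    using schreier_vertex_subset_carrier[OF H u_vertex] .
  have suffix_if_stab: "\<exists>r\<in>H. suffix y r"
    if z': "z' \<in> carrier (free_group k)" "z' \<noteq> []" "reduced (z' @ y)" "z' <#\<^bsub>free_group k\<^esub> u = u" for z'
  proof -
    have "y <#\<^bsub>free_group k\<^esub> H = (z' \<otimes>\<^bsub>free_group k\<^esub> y) <#\<^bsub>free_group k\<^esub> H"
      using z'(1,4) u_y y_carrier subgroup.subset[OF H] by (simp add: fg.lcos_m_assoc)
    then have conj: "inv\<^bsub>free_group k\<^esub> y \<otimes>\<^bsub>free_group k\<^esub> (z' \<otimes>\<^bsub>free_group k\<^esub> y) \<in> H"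
      using fg.l_coset_eq_iff[OF H] y_carrier z'(1) by simp
    have "suffix y (red (inv_word y @ z' @ y))"
      using shortest_l_coset_rep_suffix[OF H y_carrier z'(1-3) conj] shortest u_y by simp
    moreover have "red (inv_word y @ z' @ y)
        = inv\<^bsub>free_group k\<^esub> y \<otimes>\<^bsub>free_group k\<^esub> (z' \<otimes>\<^bsub>free_group k\<^esub> y)"
      using y_carrier by (simp add: free_group_inv free_group_mult)
    ultimately show ?thesis
      using conj by metis
  qed
  have "inv_word z <#\<^bsub>free_group k\<^esub> u = u"
    using fg.l_coset_inv_fixed[OF u_carrier z(1,4)] free_group_inv[OF z(1)] by simp
  then show ?thesis
    using reduced_append_or_inv_word_append[OF z(3,2)] y_carrier z(1,2,4)
      suffix_if_stab[of z] suffix_if_stab[of "inv_word z"] inv_word_in_carrier[OF z(1)]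
    by (auto simp: free_group_carrier)
qed

lemma finite_core_vertices:
  assumes "fin_gen_subgroup k H"
  shows "finite (core_vertices k H)"
proof -
  obtain S where S: "finite S" "S \<subseteq> carrier (free_group k)" "H = generate (free_group k) S"
    using assms by (auto simp: fin_gen_subgroup_def)
  have H: "subgroup H (free_group k)"
    using assms by (simp add: fin_gen_subgroup_def)
  let ?suffixes = "{s. \<exists>t\<in>insert [] (S \<union> inv_word ` S). suffix s t}"
  have "?suffixes = (\<Union>t\<in>insert [] (S \<union> inv_word ` S). set (suffixes t))"
    by auto
  then have "finite ?suffixes"
    using S(1) by simp
  moreover have "core_vertices k H \<subseteq> (\<lambda>s. s <#\<^bsub>free_group k\<^esub> H) ` ?suffixes"
  proof
    fix u assume u: "u \<in> core_vertices k H"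
    then obtain g where g: "g \<in> carrier (free_group k)" "u = g <#\<^bsub>free_group k\<^esub> H"
      using core_vertex_stabiliser(1)[OF H u] by (auto simp: schreier_vertices_def)
    then have "g \<in> u"
      using fg.lcos_self[OF g(1) H] by simp
    then obtain y where y: "y \<in> u" "\<forall>y'\<in>u. length y \<le> length y'"
      using ex_has_least_nat[of "\<lambda>y. y \<in> u" g length] by blast
    have "u = y <#\<^bsub>free_group k\<^esub> H"
      using fg.l_repr_independence[OF _ g(1) H] y(1) g(2) by simp
    moreover obtain r where "r \<in> H" "suffix y r"
      using core_vertex_shortest_rep_suffix[OF H u y] by blast
    ultimately show "u \<in> (\<lambda>s. s <#\<^bsub>free_group k\<^esub> H) ` ?suffixes"
      using l_coset_suffix_generate[OF S(2)] S(3) by blast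
  qed
  ultimately show ?thesis
    using finite_subset by blast
qed

section \<open>The orbit of the base vertex\<close>

lemma l_coset_in_core_if_conj_nat_pow:
  assumes H: "subgroup H (free_group k)" and y: "y \<in> carrier (free_group k)"
    and c: "c \<in> carrier (free_group k)" "c \<noteq> []" "cyclically_reduced c" and "(m::nat) > 0"
    and conj: "inv\<^bsub>free_group k\<^esub> y \<otimes>\<^bsub>free_group k\<^esub> (c [^]\<^bsub>free_group k\<^esub> m \<otimes>\<^bsub>free_group k\<^esub> y) \<in> H"
  shows "y <#\<^bsub>free_group k\<^esub> H \<in> core_vertices k H"
proof -
  let ?z = "c [^]\<^bsub>free_group k\<^esub> m"
  have z: "?z \<in> carrier (free_group k)" "?z \<noteq> []" "cyclically_reduced ?z"
    using c \<open>m > 0\<close> fg.nat_pow_closed[OF c(1)] free_group_nat_pow_cyclically_reduced[OF c(3)]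
      cyclically_reduced_concat_replicate[OF c(3)] by (simp_all del: fg.nat_pow_closed)
  have "?z <#\<^bsub>free_group k\<^esub> (y <#\<^bsub>free_group k\<^esub> H) = (?z \<otimes>\<^bsub>free_group k\<^esub> y) <#\<^bsub>free_group k\<^esub> H"
    using z(1) y subgroup.subset[OF H] by (simp add: fg.lcos_m_assoc)
  also have "\<dots> = y <#\<^bsub>free_group k\<^esub> H"
    using fg.l_coset_eq_iff[OF H y, of "?z \<otimes>\<^bsub>free_group k\<^esub> y"] z(1) y conj by simp
  finally show ?thesis
    using core_verticesI[OF H _ z] y by (auto simp: schreier_vertices_def)
qed

lemma translated_l_coset_in_core:
  assumes H1: "subgroup H1 (free_group k)" and H2: "subgroup H2 (free_group k)"
    and G: "subgroup G (free_group k)" "G \<subseteq> H2" and fin: "finite ((\<lambda>h. h <#\<^bsub>free_group k\<^esub> G) ` H1)"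
    and f: "f \<in> H1" "f = inv\<^bsub>free_group k\<^esub> t \<otimes>\<^bsub>free_group k\<^esub> c \<otimes>\<^bsub>free_group k\<^esub> t"
    and t: "t \<in> carrier (free_group k)"
    and c: "c \<in> carrier (free_group k)" "c \<noteq> []" "cyclically_reduced c"
    and h: "h \<in> H1"
  shows "t <#\<^bsub>free_group k\<^esub> (h <#\<^bsub>free_group k\<^esub> H2) \<in> core_vertices k H2"
proof -
  let ?F = "free_group k"
  have h_carrier: "h \<in> carrier ?F" and f_carrier: "f \<in> carrier ?F"
    using subgroup.mem_carrier[OF H1] h f(1) by blast+
  have "inv\<^bsub>?F\<^esub> h \<otimes>\<^bsub>?F\<^esub> f \<otimes>\<^bsub>?F\<^esub> h \<in> H1"
    using H1 f(1) h by (simp add: subgroup.m_closed subgroup.m_inv_closed)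
  then obtain m :: nat where m: "m > 0" "(inv\<^bsub>?F\<^esub> h \<otimes>\<^bsub>?F\<^esub> f \<otimes>\<^bsub>?F\<^esub> h) [^]\<^bsub>?F\<^esub> m \<in> G"
    using fg.nat_pow_in_subgroup_of_finite_index[OF H1 G(1) fin] by blast
  have "inv\<^bsub>?F\<^esub> (t \<otimes>\<^bsub>?F\<^esub> h) \<otimes>\<^bsub>?F\<^esub> (c [^]\<^bsub>?F\<^esub> m \<otimes>\<^bsub>?F\<^esub> (t \<otimes>\<^bsub>?F\<^esub> h))
      = inv\<^bsub>?F\<^esub> h \<otimes>\<^bsub>?F\<^esub> (inv\<^bsub>?F\<^esub> t \<otimes>\<^bsub>?F\<^esub> c [^]\<^bsub>?F\<^esub> m \<otimes>\<^bsub>?F\<^esub> t) \<otimes>\<^bsub>?F\<^esub> h"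
    using t c(1) h_carrier by (simp add: fg.inv_mult_group fg.m_assoc)
  also have "\<dots> = inv\<^bsub>?F\<^esub> h \<otimes>\<^bsub>?F\<^esub> f [^]\<^bsub>?F\<^esub> m \<otimes>\<^bsub>?F\<^esub> h"
    using fg.conj_nat_pow[OF t c(1)] f(2) by simp
  also have "\<dots> = (inv\<^bsub>?F\<^esub> h \<otimes>\<^bsub>?F\<^esub> f \<otimes>\<^bsub>?F\<^esub> h) [^]\<^bsub>?F\<^esub> m"
    using fg.conj_nat_pow[OF h_carrier f_carrier] by simp
  finally have "(t \<otimes>\<^bsub>?F\<^esub> h) <#\<^bsub>?F\<^esub> H2 \<in> core_vertices k H2"
    using l_coset_in_core_if_conj_nat_pow[OF H2 _ c m(1)] m(2) G(2) t h_carrier by auto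
  then show ?thesis
    using fg.lcos_m_assoc[OF subgroup.subset[OF H2] t h_carrier] by simp
qed

lemma card_l_coset_orbit_le_card_core_vertices:
  assumes H1: "subgroup H1 (free_group k)" and H2: "fin_gen_subgroup k H2"
    and G: "subgroup G (free_group k)" "G \<subseteq> H2"
    and fin: "finite ((\<lambda>h. h <#\<^bsub>free_group k\<^esub> G) ` H1)"
    and f: "f \<in> H1" "f \<noteq> []"
  shows "card ((\<lambda>h. h <#\<^bsub>free_group k\<^esub> H2) ` H1) \<le> card (core_vertices k H2)"
proof -
  let ?F = "free_group k" and ?orbit = "(\<lambda>h. h <#\<^bsub>free_group k\<^esub> H2) ` H1"
  have H2_subgroup: "subgroup H2 ?F"
    using H2 by (simp add: fin_gen_subgroup_def)
  have f_carrier: "f \<in> carrier ?F"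
    using subgroup.mem_carrier[OF H1 f(1)] .
  then have "reduced f"
    by (simp add: free_group_carrier)
  then obtain u c where c: "c \<noteq> []" "cyclically_reduced c" and f_uc: "f = u @ c @ inv_word u"
    using reduced_word_cyclic_decomposition f(2) by blast
  have uc: "u \<in> carrier ?F" "c \<in> carrier ?F"
    using f_carrier f_uc append_in_carrierD by blast+
  define t where "t = inv_word u"
  have t: "t \<in> carrier ?F" "inv\<^bsub>?F\<^esub> t = u"
    using uc(1) by (simp_all add: t_def inv_word_in_carrier free_group_inv)
  have f_conj: "f = inv\<^bsub>?F\<^esub> t \<otimes>\<^bsub>?F\<^esub> c \<otimes>\<^bsub>?F\<^esub> t"
    using f_carrier unfolding t(2) by (simp add: f_uc t_def free_group_mult red_reduced free_group_carrier)
  have "inj_on (\<lambda>v. t <#\<^bsub>?F\<^esub> v) ?orbit"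
  proof (rule inj_on_inverseI)
    fix v assume "v \<in> ?orbit"
    then have "v \<subseteq> carrier ?F"
      using fg.l_coset_subset_G[OF subgroup.subset[OF H2_subgroup]] subgroup.mem_carrier[OF H1] by blast
    then show "u <#\<^bsub>?F\<^esub> (t <#\<^bsub>?F\<^esub> v) = v"
      using uc(1) t(1) fg.lcos_mult_one by (simp add: fg.lcos_m_assoc t_def free_group_mult free_group_one)
  qed
  then have "card ?orbit = card ((\<lambda>v. t <#\<^bsub>?F\<^esub> v) ` ?orbit)"
    by (simp add: card_image)
  also have "\<dots> \<le> card (core_vertices k H2)"
    using translated_l_coset_in_core[OF H1 H2_subgroup G fin f(1) f_conj t(1) uc(2) c]
      finite_core_vertices[OF H2] by (intro card_mono) auto
  finally show ?thesis .
qed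

theorem mainTheorem10:
  fixes k :: nat and H1 H2 G :: "letter list set"
  assumes "fin_gen_subgroup k H1"
    and "fin_gen_subgroup k H2"
    and "subgroup G (free_group k)"
    and "G \<subseteq> H1 \<inter> H2"
    and "finite (rcosets\<^bsub>(free_group k)\<lparr>carrier := H1\<rparr>\<^esub> G)"
    and "\<forall>d::nat. d dvd card (rcosets\<^bsub>(free_group k)\<lparr>carrier := H1\<rparr>\<^esub> G) \<and> d \<noteq> 1
            \<longrightarrow> d > card (core_vertices k H2)"
  shows "H1 \<subseteq> H2"
proof (rule ccontr)
  let ?F = "free_group k" and ?index = "card (rcosets\<^bsub>(free_group k)\<lparr>carrier := H1\<rparr>\<^esub> G)"
  let ?l_cosets = "(\<lambda>h. h <#\<^bsub>?F\<^esub> G) ` H1" and ?orbit = "(\<lambda>h. h <#\<^bsub>?F\<^esub> H2) ` H1"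
  assume "\<not> H1 \<subseteq> H2"
  then obtain f where f: "f \<in> H1" "f \<notin> H2"
    by blast
  have H1: "subgroup H1 ?F" and H2: "subgroup H2 ?F"
    using assms(1,2) by (simp_all add: fin_gen_subgroup_def)
  note bij = fg.bij_betw_set_inv_rcosets_l_cosets[OF H1 assms(3)]
  have fin: "finite ?l_cosets"
    using bij_betw_finite[OF bij] assms(5) by simp
  have "card ?orbit dvd ?index"
    using fg.card_l_coset_image_dvd[OF H1 assms(3) H2 _ fin] assms(4) bij_betw_same_card[OF bij]
    by simp
  moreover have "card ?orbit \<noteq> 1"
    using fg.card_l_coset_image_neq_one[OF H1 H2 f] .
  moreover have "f \<noteq> []"
    using f(2) subgroup.one_closed[OF H2] by (auto simp: free_group_one)
  then have "card ?orbit \<le> card (core_vertices k H2)"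
    using card_l_coset_orbit_le_card_core_vertices[OF H1 assms(2,3) _ fin f(1)] assms(4) by blast
  ultimately show False
    using assms(6) by (meson leD)
qed

end
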